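(* Let $N\ge4$, $\Lambda^2=(-1,1)^2$, and let $\mathcal F$ be a diffeomorphism from $[-1,1]^2$ onto $\overline\Omega$, $\Omega=\mathcal F(\Lambda^2)$. For $m,n\ge1$ define $$\boldsymbol\chi_{m,n}(\boldsymbol\xi)=\big(\varphi_{m+3}(\xi_1)\psi_{n+2}(\xi_2),\,-\psi_{m+2}(\xi_1)\varphi_{n+3}(\xi_2)\big)^{\intercal},\qquad \tilde{\boldsymbol\chi}_{m,n}=\mathcal F^{\rm div}[\boldsymbol\chi_{m,n}].$$ Then $\boldsymbol H^1_{N,0}(\mathrm{div}0;\Omega):=\mathrm{span}\{\tilde{\boldsymbol\chi}_{m,n}:1\le m,n\le N-3\}$ is a conforming divergence-free approximation space for $\boldsymbol H^1_0(\mathrm{div}0;\Omega)$; in particular $\nabla_{\boldsymbol x}\cdot\tilde{\boldsymbol\chi}_{m,n}=0$ in $\Omega$ for all $1\le m,n\le N-3$.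
   Context: $P_n^{(\alpha,\beta)}$ is the classical Jacobi polynomial; generalized Jacobi polynomials: $P_n^{(-1,-1)}(\xi)=\frac{\xi^2-1}{4}P_{n-2}^{(1,1)}(\xi)$ ($n\ge2$), $P_n^{(-2,-2)}(\xi)=\big(\frac{\xi^2-1}{4}\big)^2P_{n-4}^{(2,2)}(\xi)$ ($n\ge4$). $\psi_m(\xi)=\frac{\sqrt{2(2m-1)}}{m-1}P_m^{(-1,-1)}(\xi)$ ($m\ge2$), $\varphi_m(\xi)=\frac{\sqrt{8(2m-3)}}{(m-3)(m-2)}P_m^{(-2,-2)}(\xi)$ ($m\ge4$). Contravariant Piola transformation: $\mathcal F^{\rm div}[\boldsymbol\Phi](\boldsymbol x)=\frac{\partial_{\boldsymbol\xi}\boldsymbol x}{\det(\partial_{\boldsymbol\xi}\boldsymbol x)}\boldsymbol\Phi(\mathcal F^{-1}(\boldsymbol x))$ with $\partial_{\boldsymbol\xi}\boldsymbol x$ the Jacobian of $\mathcal F$. $\boldsymbol H^1_0(\mathrm{div}0;\Omega)=\{\boldsymbol v\in H^1_0(\Omega)^2:\nabla\cdot\boldsymbol v=0\}$. *)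

theory Defs
  imports "HOL-Analysis.Analysis"
begin

text \<open>Classical Jacobi polynomial P_n^(a,b) for nonnegative integer parameters,
  explicit formula (DLMF 18.5.8).\<close>
definition jacobiP :: "nat \<Rightarrow> nat \<Rightarrow> nat \<Rightarrow> real \<Rightarrow> real" where
  "jacobiP a b n x = (\<Sum>s=0..n. real ((n + a) choose (n - s)) * real ((n + b) choose s)
       * ((x - 1) / 2) ^ s * ((x + 1) / 2) ^ (n - s))"

text \<open>Generalized Jacobi polynomials P_n^(-1,-1) (n>=2) and P_n^(-2,-2) (n>=4).\<close>
definition jacobiP_m1 :: "nat \<Rightarrow> real \<Rightarrow> real" where
  "jacobiP_m1 n x = (x^2 - 1) / 4 * jacobiP 1 1 (n - 2) x"

definition jacobiP_m2 :: "nat \<Rightarrow> real \<Rightarrow> real" where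
  "jacobiP_m2 n x = ((x^2 - 1) / 4)^2 * jacobiP 2 2 (n - 4) x"

definition psi_basis :: "nat \<Rightarrow> real \<Rightarrow> real" where
  "psi_basis m x = sqrt (2 * (2 * real m - 1)) / (real m - 1) * jacobiP_m1 m x"

definition phi_basis :: "nat \<Rightarrow> real \<Rightarrow> real" where
  "phi_basis m x = sqrt (8 * (2 * real m - 3)) / ((real m - 3) * (real m - 2)) * jacobiP_m2 m x"

definition Lambda2 :: "(real^2) set" where
  "Lambda2 = {\<xi>. \<forall>i. \<bar>\<xi> $ i\<bar> < 1}"

definition Lambda2_closed :: "(real^2) set" where
  "Lambda2_closed = {\<xi>. \<forall>i. \<bar>\<xi> $ i\<bar> \<le> 1}"

definition chi :: "nat \<Rightarrow> nat \<Rightarrow> real^2 \<Rightarrow> real^2" where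
  "chi m n \<xi> = vector [ phi_basis (m + 3) (\<xi> $ 1) * psi_basis (n + 2) (\<xi> $ 2),
                        - psi_basis (m + 2) (\<xi> $ 1) * phi_basis (n + 3) (\<xi> $ 2) ]"

definition pdiff :: "2 \<Rightarrow> (real^2 \<Rightarrow> real) \<Rightarrow> real^2 \<Rightarrow> real" where
  "pdiff i g x = frechet_derivative g (at x) (axis i 1)"

fun iter_pdiff :: "2 list \<Rightarrow> (real^2 \<Rightarrow> real) \<Rightarrow> real^2 \<Rightarrow> real" where
  "iter_pdiff [] g = g"
| "iter_pdiff (i # is) g = pdiff i (iter_pdiff is g)"

definition smooth_on :: "(real^2) set \<Rightarrow> (real^2 \<Rightarrow> real^2) \<Rightarrow> bool" where
  "smooth_on U F = (\<forall>k is. \<forall>x\<in>U. (iter_pdiff is (\<lambda>y. F y $ k)) differentiable (at x))"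

definition diffeo_square :: "(real^2 \<Rightarrow> real^2) \<Rightarrow> bool" where
  "diffeo_square F = ((\<exists>U. open U \<and> Lambda2_closed \<subseteq> U \<and> smooth_on U F)
      \<and> inj_on F Lambda2_closed
      \<and> (\<forall>\<xi>\<in>Lambda2_closed. det (matrix (frechet_derivative F (at \<xi>))) \<noteq> 0))"

definition jac :: "(real^2 \<Rightarrow> real^2) \<Rightarrow> real^2 \<Rightarrow> real^2^2" where
  "jac F \<xi> = matrix (frechet_derivative F (at \<xi>))"

definition piola_div :: "(real^2 \<Rightarrow> real^2) \<Rightarrow> (real^2 \<Rightarrow> real^2) \<Rightarrow> real^2 \<Rightarrow> real^2" where
  "piola_div F \<Phi> x = (let \<xi> = inv_into Lambda2_closed F x in
       (1 / det (jac F \<xi>)) *\<^sub>R (jac F \<xi> *v \<Phi> \<xi>))"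

definition divergence :: "(real^2 \<Rightarrow> real^2) \<Rightarrow> real^2 \<Rightarrow> real" where
  "divergence v x = (\<Sum>i\<in>UNIV. frechet_derivative v (at x) (axis i 1) $ i)"

end

(*
  Each chi_{m,n} is the curl (d_2 s, -d_1 s) of the stream function
  s = phi_{m+3}(xi_1) phi_{n+3}(xi_2), because phi'_{m+3} = psi_{m+2}; this instance of the
  derivative formula for Jacobi polynomials is checked on the explicit binomial sums by a
  telescoping argument. So a combination X of the chi_{m,n} is a polynomial field with div X = 0,
  and it vanishes on the boundary of the square since phi and psi vanish at +-1.

  For v = F^div[X] one has v o F = J X / det J, with J the Jacobian of F, and hence
  (div v) o F = tr (D(J X / det J) J^-1) = div X / det J: the second derivatives of F drop out
  by the symmetry of mixed partials (Schwarz's theorem, proved from the mean value theorem for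
  second differences). The image Omega of the open square is open by invariance of domain, v is
  differentiable there by the inverse function theorem, and continuity and boundedness of Dv,
  continuity of v up to the boundary and its vanishing on the boundary follow from the
  compactness of the closed square, on which D(v o F) and J^-1 are continuous.
*)

theory Submission
  imports Defs "HOL-Computational_Algebra.Polynomial"
begin

section \<open>Jacobi polynomials and the basis functions\<close>

lemma jacobiP_bubble_power:
  fixes x :: real
  shows "((x\<^sup>2 - 1) / 4) ^ a * jacobiP a a n x =
    (\<Sum>s=0..n. real ((n + a) choose (s + a)) * real ((n + a) choose s)
       * ((x - 1) / 2) ^ (s + a) * ((x + 1) / 2) ^ (n + a - s))"
  unfolding jacobiP_def sum_distrib_left
proof (rule sum.cong[OF refl])
  fix s assume "s \<in> {0..n}"
  then have "s \<le> n" by simp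
  then have choose: "(n + a) choose (n - s) = (n + a) choose (s + a)"
    using binomial_symmetric[of "n - s" "n + a"] by (simp add: add.commute)
  have bubble: "(x\<^sup>2 - 1) / 4 = (x - 1) / 2 * ((x + 1) / 2)"
    by (simp add: power2_eq_square field_simps)
  have exponent: "n + a - s = (n - s) + a" using \<open>s \<le> n\<close> by simp
  show "((x\<^sup>2 - 1) / 4) ^ a * (real ((n + a) choose (n - s)) * real ((n + a) choose s)
       * ((x - 1) / 2) ^ s * ((x + 1) / 2) ^ (n - s)) =
     real ((n + a) choose (s + a)) * real ((n + a) choose s)
       * ((x - 1) / 2) ^ (s + a) * ((x + 1) / 2) ^ (n + a - s)"
    unfolding choose bubble exponent power_add power_mult_distrib by (simp only: mult_ac)
qed

lemma sum_atMost_Suc_shift_pairs: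
  fixes A B R :: "nat \<Rightarrow> 'a::comm_monoid_add"
  assumes "A (Suc n) = 0" "R 0 = A 0" "\<And>s. s \<le> n \<Longrightarrow> R (Suc s) = A (Suc s) + B s"
  shows "(\<Sum>s\<le>n. A s + B s) = (\<Sum>s\<le>Suc n. R s)"
proof -
  have "(\<Sum>s\<le>n. A s + B s) = (\<Sum>s\<le>Suc n. A s) + (\<Sum>s\<le>n. B s)"
    using assms(1) by (simp add: sum.distrib)
  also have "\<dots> = A 0 + (\<Sum>s\<le>n. A (Suc s) + B s)"
    by (simp only: sum.atMost_Suc_shift sum.distrib add.assoc)
  also have "\<dots> = R 0 + (\<Sum>s\<le>n. R (Suc s))"
    using assms(2,3) by simp
  also have "\<dots> = (\<Sum>s\<le>Suc n. R s)"
    by (simp only: sum.atMost_Suc_shift)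
  finally show ?thesis .
qed

lemma choose_product_recurrence:
  assumes "s + 2 \<le> K"
  shows "(s + 3) * (K choose (s + 3)) * (K choose (s + 1)) + (K - s) * (K choose s) * (K choose (s + 2))
       = (K - 1) * (K choose (s + 2)) * (K choose (s + 1))"
proof -
  have "(s + 3) * (K choose (s + 3)) = (K - (s + 2)) * (K choose (s + 2))"
    using binomial_absorb_comp[of K "s + 2"] binomial_absorption[of "s + 2" K]
    by (simp add: numeral_3_eq_3)
  moreover have "(K - s) * (K choose s) = (s + 1) * (K choose (s + 1))"
    using binomial_absorb_comp[of K s] binomial_absorption[of s K] by simp
  ultimately have "(s + 3) * (K choose (s + 3)) * (K choose (s + 1)) + (K - s) * (K choose s) * (K choose (s + 2))
      = ((K - (s + 2)) + (s + 1)) * (K choose (s + 2)) * (K choose (s + 1))"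
    by (simp add: algebra_simps)
  also have "(K - (s + 2)) + (s + 1) = K - 1" using assms by simp
  finally show ?thesis .
qed

lemma bubble_monomial_has_real_derivative:
  fixes x :: real
  shows "((\<lambda>y. ((y - 1) / 2) ^ Suc p * ((y + 1) / 2) ^ Suc q) has_real_derivative
     (real (Suc p) * ((x - 1) / 2) ^ p * ((x + 1) / 2) ^ Suc q
      + real (Suc q) * ((x - 1) / 2) ^ Suc p * ((x + 1) / 2) ^ q) / 2) (at x)"
  by (rule derivative_eq_intros refl | simp)+ (simp add: field_simps)

lemma jacobiP_2_2_telescoping:
  fixes k :: nat and u w :: real
  defines "K \<equiv> k + 2"
  defines "C \<equiv> \<lambda>s t. real (K choose s) * real (K choose t)"
  shows "(\<Sum>s\<le>k. C (s + 2) s * (real (s + 2) * u ^ (s + 1) * w ^ (K - s)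
                                  + real (K - s) * u ^ (s + 2) * w ^ (K - s - 1)) / 2)
       = (real k + 1) / 2 * (\<Sum>s\<le>Suc k. C (s + 1) s * u ^ (s + 1) * w ^ (K - s))"
proof -
  define A where "A s = C (s + 2) s * real (s + 2) * u ^ (s + 1) * w ^ (K - s) / 2" for s
  define B where "B s = C (s + 2) s * real (K - s) * u ^ (s + 2) * w ^ (K - s - 1) / 2" for s
  define R where "R s = (real k + 1) / 2 * (C (s + 1) s * u ^ (s + 1) * w ^ (K - s))" for s
  have "(\<Sum>s\<le>k. A s + B s) = (\<Sum>s\<le>Suc k. R s)"
  proof (rule sum_atMost_Suc_shift_pairs)
    show "A (Suc k) = 0" by (simp add: A_def C_def K_def binomial_eq_0 del: binomial_Suc_Suc)
    have "2 * (K choose 2) = K * (k + 1)"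
      using binomial_absorption[of 1 K] by (simp add: K_def numeral_2_eq_2)
    then have "real (K choose 2) = real K * (real k + 1) / 2"
      by (simp add: field_simps flip: of_nat_mult)
    then show "R 0 = A 0" by (simp add: R_def A_def C_def numeral_2_eq_2)
    fix s assume "s \<le> k"
    then have "(Suc s + 2) * (K choose (Suc s + 2)) * (K choose Suc s) + (K - s) * (K choose s) * (K choose (s + 2))
        = (k + 1) * (K choose (Suc s + 1)) * (K choose Suc s)"
      using choose_product_recurrence[of s K] by (simp add: K_def numeral_3_eq_3 del: binomial_Suc_Suc)
    then have "real ((Suc s + 2) * (K choose (Suc s + 2)) * (K choose Suc s) + (K - s) * (K choose s) * (K choose (s + 2)))
        = real ((k + 1) * (K choose (Suc s + 1)) * (K choose Suc s))"
      by (rule arg_cong)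
    then have coeff: "C (Suc s + 2) (Suc s) * real (Suc s + 2) + C (s + 2) s * real (K - s)
        = (real k + 1) * C (Suc s + 1) (Suc s)"
      unfolding C_def of_nat_add of_nat_mult by (simp add: algebra_simps)
    have "A (Suc s) + B s = (C (Suc s + 2) (Suc s) * real (Suc s + 2) + C (s + 2) s * real (K - s))
        * u ^ (s + 2) * w ^ (K - Suc s) / 2"
      unfolding A_def B_def by (simp add: field_simps)
    also have "\<dots> = R (Suc s)"
      unfolding coeff R_def by simp
    finally show "R (Suc s) = A (Suc s) + B s" ..
  qed
  moreover have "C (s + 2) s * (real (s + 2) * u ^ (s + 1) * w ^ (K - s)
      + real (K - s) * u ^ (s + 2) * w ^ (K - s - 1)) / 2 = A s + B s" for s
    unfolding A_def B_def by (simp add: field_simps)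
  moreover have "(real k + 1) / 2 * (\<Sum>s\<le>Suc k. C (s + 1) s * u ^ (s + 1) * w ^ (K - s)) = (\<Sum>s\<le>Suc k. R s)"
    unfolding R_def by (rule sum_distrib_left)
  ultimately show ?thesis by (simp only:)
qed

lemma bubble_jacobiP_2_2_has_real_derivative:
  fixes x :: real
  shows "((\<lambda>y. ((y\<^sup>2 - 1) / 4)\<^sup>2 * jacobiP 2 2 k y) has_real_derivative
           (real k + 1) / 2 * ((x\<^sup>2 - 1) / 4) * jacobiP 1 1 (k + 1) x) (at x)"
proof -
  define K where "K = k + 2"
  define C where "C s t = real (K choose s) * real (K choose t)" for s t
  let ?u = "(x - 1) / 2" and ?w = "(x + 1) / 2"
  have "((\<lambda>y. C (s + 2) s * (((y - 1) / 2) ^ (s + 2) * ((y + 1) / 2) ^ (K - s))) has_real_derivative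
      C (s + 2) s * (real (s + 2) * ?u ^ (s + 1) * ?w ^ (K - s) + real (K - s) * ?u ^ (s + 2) * ?w ^ (K - s - 1)) / 2)
      (at x)" if "s \<le> k" for s
  proof -
    define q where "q = k + 1 - s"
    have q: "K - s = Suc q" using that by (simp add: K_def q_def)
    show ?thesis
      using DERIV_cmult[OF bubble_monomial_has_real_derivative[of "Suc s" q x], of "C (s + 2) s"]
      unfolding q by simp
  qed
  then have derivative: "((\<lambda>y. \<Sum>s\<le>k. C (s + 2) s * (((y - 1) / 2) ^ (s + 2) * ((y + 1) / 2) ^ (K - s))) has_real_derivative
      (\<Sum>s\<le>k. C (s + 2) s * (real (s + 2) * ?u ^ (s + 1) * ?w ^ (K - s)
                               + real (K - s) * ?u ^ (s + 2) * ?w ^ (K - s - 1)) / 2)) (at x)"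
    by (intro DERIV_sum) auto
  have lhs: "(\<lambda>y. ((y\<^sup>2 - 1) / 4)\<^sup>2 * jacobiP 2 2 k y)
      = (\<lambda>y. \<Sum>s\<le>k. C (s + 2) s * (((y - 1) / 2) ^ (s + 2) * ((y + 1) / 2) ^ (K - s)))"
    using jacobiP_bubble_power[of _ 2 k] by (simp add: C_def K_def atLeast0AtMost mult.assoc)
  have rhs: "(real k + 1) / 2 * ((x\<^sup>2 - 1) / 4) * jacobiP 1 1 (k + 1) x
      = (real k + 1) / 2 * (\<Sum>s\<le>Suc k. C (s + 1) s * ?u ^ (s + 1) * ?w ^ (K - s))"
    using jacobiP_bubble_power[of x 1 "k + 1"] by (simp add: C_def K_def atLeast0AtMost)
  show ?thesis
    using derivative unfolding lhs rhs jacobiP_2_2_telescoping[of k ?u ?w, folded K_def, folded C_def, symmetric] .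
qed

lemma jacobiP_poly: "\<exists>p. jacobiP a b n = poly p"
proof
  show "jacobiP a b n = poly (\<Sum>s=0..n. smult (real ((n + a) choose (n - s)) * real ((n + b) choose s))
     ([:-1/2, 1/2:] ^ s * [:1/2, 1/2:] ^ (n - s)))"
    by (rule ext) (simp add: jacobiP_def poly_sum mult.assoc add_divide_distrib diff_divide_distrib add.commute)
qed

lemma psi_basis_poly: "\<exists>p. psi_basis k = poly p"
proof -
  obtain p where p: "jacobiP 1 1 (k - 2) = poly p" using jacobiP_poly by blast
  show ?thesis
    unfolding psi_basis_def[abs_def] jacobiP_m1_def p
    by (rule exI[of _ "smult (sqrt (2 * (2 * real k - 1)) / (real k - 1)) ([:-1/4, 0, 1/4:] * p)"], rule ext)
       (simp add: power2_eq_square field_simps)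
qed

lemma phi_basis_poly: "\<exists>p. phi_basis k = poly p"
proof -
  obtain p where p: "jacobiP 2 2 (k - 4) = poly p" using jacobiP_poly by blast
  show ?thesis
    by (rule exI[of _ "smult (sqrt (8 * (2 * real k - 3)) / ((real k - 3) * (real k - 2))) ([:-1/4, 0, 1/4:]^2 * p)"])
       (auto simp: phi_basis_def jacobiP_m2_def p power2_eq_square field_simps)
qed

lemma psi_basis_eq_0: "\<bar>x\<bar> = 1 \<Longrightarrow> psi_basis k x = 0"
  by (auto simp: psi_basis_def jacobiP_m1_def abs_if split: if_splits)

lemma phi_basis_eq_0: "\<bar>x\<bar> = 1 \<Longrightarrow> phi_basis k x = 0"
  by (auto simp: phi_basis_def jacobiP_m2_def abs_if split: if_splits)

lemma phi_basis_has_real_derivative: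
  assumes "1 \<le> m"
  shows "(phi_basis (m + 3) has_real_derivative psi_basis (m + 2) x) (at x)"
proof -
  define r where "r = sqrt (2 * (2 * real m + 3))"
  have "sqrt (8 * (2 * real (m + 3) - 3)) = sqrt 4 * r"
    unfolding r_def real_sqrt_mult[symmetric] by (simp add: algebra_simps)
  then have phi: "phi_basis (m + 3) = (\<lambda>y. 2 * r / (real m * (real m + 1)) * (((y\<^sup>2 - 1) / 4)\<^sup>2 * jacobiP 2 2 (m - 1) y))"
    by (auto simp: phi_basis_def jacobiP_m2_def)
  have psi: "psi_basis (m + 2) x = r / (real m + 1) * ((x\<^sup>2 - 1) / 4 * jacobiP 1 1 m x)"
    by (simp add: psi_basis_def jacobiP_m1_def r_def algebra_simps)
  have "real m * (real m + 1) > 0" using assms by simp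
  then have "2 * r / (real m * (real m + 1)) * (real m / 2) = r / (real m + 1)"
    by (simp add: field_simps)
  moreover have "real (m - 1) + 1 = real m" "m - 1 + 1 = m" using assms by (simp_all add: of_nat_diff)
  ultimately have psi_eq: "psi_basis (m + 2) x
      = 2 * r / (real m * (real m + 1)) * ((real (m - 1) + 1) / 2 * ((x\<^sup>2 - 1) / 4) * jacobiP 1 1 (m - 1 + 1) x)"
    unfolding psi by (metis mult.assoc times_divide_eq_left)
  show ?thesis
    unfolding phi psi_eq by (intro DERIV_cmult bubble_jacobiP_2_2_has_real_derivative) 
qed

lemma deriv_poly: "deriv (poly p) = poly (pderiv p)"
  by (rule ext) (rule DERIV_imp_deriv[OF poly_DERIV])

lemma basis_functions_C1:
  shows "psi_basis k differentiable (at x)" "phi_basis k differentiable (at x)"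
    and "continuous_on S (deriv (psi_basis k))" "continuous_on S (deriv (phi_basis k))"
proof -
  obtain p q where "psi_basis k = poly p" "phi_basis k = poly q"
    using psi_basis_poly phi_basis_poly by metis
  then show "psi_basis k differentiable (at x)" "phi_basis k differentiable (at x)"
    and "continuous_on S (deriv (psi_basis k))" "continuous_on S (deriv (phi_basis k))"
    by (simp_all add: deriv_poly continuous_on_poly continuous_on_id)
qed

section \<open>Partial derivatives on the plane\<close>

lemma pdiff_has_derivative:
  assumes "(g has_derivative g') (at x)"
  shows "pdiff k g x = g' (axis k 1)"
  using frechet_derivative_at[OF assms] by (simp add: pdiff_def)

lemma has_real_derivative_along_axis:
  fixes g :: "real^2 \<Rightarrow> real"
  assumes "g differentiable at (y + s *\<^sub>R axis k 1)"
  shows "((\<lambda>t. g (y + t *\<^sub>R axis k 1)) has_real_derivative pdiff k g (y + s *\<^sub>R axis k 1)) (at s)"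
proof -
  let ?D = "frechet_derivative g (at (y + s *\<^sub>R axis k 1))"
  have "(g has_derivative ?D) (at (y + s *\<^sub>R axis k 1))"
    using assms frechet_derivative_works by blast
  moreover have "((\<lambda>t. y + t *\<^sub>R axis k 1) has_derivative (\<lambda>t. t *\<^sub>R axis k 1)) (at s)"
    by (auto intro!: derivative_eq_intros)
  ultimately have "((\<lambda>t. g (y + t *\<^sub>R axis k 1)) has_derivative (\<lambda>t. ?D (t *\<^sub>R axis k 1))) (at s)"
    using has_derivative_compose by blast
  moreover have "(\<lambda>t. ?D (t *\<^sub>R axis k 1)) = (\<lambda>t. pdiff k g (y + s *\<^sub>R axis k 1) * t)"
    using linear_scale[OF has_derivative_linear[OF \<open>(g has_derivative ?D) _\<close>]]
    by (simp add: pdiff_def mult.commute)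
  ultimately show ?thesis by (simp add: has_field_derivative_def)
qed

lemma pdiff_eqI:
  fixes g :: "real^2 \<Rightarrow> real"
  assumes "g differentiable at y"
    and "((\<lambda>t. g (y + t *\<^sub>R axis k 1)) has_real_derivative D) (at 0)"
  shows "pdiff k g y = D"
  using DERIV_unique[OF has_real_derivative_along_axis[of g y 0 k] assms(2)] assms(1) by simp

lemma frechet_derivative_eq_pdiff_sum:
  fixes g :: "real^2 \<Rightarrow> real"
  assumes "g differentiable at x"
  shows "frechet_derivative g (at x) h = h$1 * pdiff 1 g x + h$2 * pdiff 2 g x"
proof -
  have "linear (frechet_derivative g (at x))"
    using assms frechet_derivative_works has_derivative_linear by blast
  then have "frechet_derivative g (at x) (h$1 *\<^sub>R axis 1 1 + h$2 *\<^sub>R axis 2 1)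
      = h$1 * pdiff 1 g x + h$2 * pdiff 2 g x"
    by (simp add: linear_add linear_scale pdiff_def)
  moreover have "h = h$1 *\<^sub>R axis 1 1 + h$2 *\<^sub>R axis 2 1"
    by (simp add: vec_eq_iff forall_2 axis_def)
  ultimately show ?thesis by simp
qed

lemma differentiable_vec2_iff:
  fixes F :: "real^2 \<Rightarrow> real^2"
  shows "F differentiable at x \<longleftrightarrow> (\<forall>i. (\<lambda>y. F y $ i) differentiable at x)"
  using differentiable_componentwise_within[of F x UNIV]
  by (auto simp: Basis_vec_def inner_axis)

lemma continuous_on_vec_iff:
  fixes f :: "'a::t2_space \<Rightarrow> real^'n"
  shows "continuous_on S f \<longleftrightarrow> (\<forall>i. continuous_on S (\<lambda>x. f x $ i))"
  by (auto simp: continuous_on_componentwise[of S f] Basis_vec_def inner_axis)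

lemma frechet_derivative_vec_nth:
  fixes F :: "real^2 \<Rightarrow> real^2"
  assumes "F differentiable at x"
  shows "frechet_derivative F (at x) h $ i = frechet_derivative (\<lambda>y. F y $ i) (at x) h"
proof -
  have "(F has_derivative frechet_derivative F (at x)) (at x)"
    using assms frechet_derivative_works by blast
  from frechet_derivative_at[OF bounded_linear.has_derivative[OF bounded_linear_vec_nth this, of i]]
  show ?thesis by (metis (no_types))
qed

lemma matrix_frechet_derivative_nth:
  fixes F :: "real^2 \<Rightarrow> real^2"
  assumes "F differentiable at x"
  shows "matrix (frechet_derivative F (at x)) $ i $ j = pdiff j (\<lambda>y. F y $ i) x"
  using frechet_derivative_vec_nth[OF assms] by (simp add: matrix_def pdiff_def)

lemma norm_axis_combination_le:
  "norm (a *\<^sub>R axis i 1 + b *\<^sub>R axis j 1 :: real^2) \<le> \<bar>a\<bar> + \<bar>b\<bar>"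
  using norm_triangle_ineq[of "a *\<^sub>R axis i 1" "b *\<^sub>R axis j 1 :: real^2"] by simp

lemma second_difference_mean_value:
  fixes g :: "real^2 \<Rightarrow> real"
  assumes h: "0 < h" and box: "cball \<xi> (2 * h) \<subseteq> U"
    and D: "\<And>y. y \<in> U \<Longrightarrow> g differentiable at y \<and> pdiff i g differentiable at y"
  obtains q where "dist q \<xi> < 2 * h"
    and "g (\<xi> + h *\<^sub>R axis i 1 + h *\<^sub>R axis j 1) - g (\<xi> + h *\<^sub>R axis i 1)
           - g (\<xi> + h *\<^sub>R axis j 1) + g \<xi> = h * h * pdiff j (pdiff i g) q"
proof -
  define e f :: "real^2" where "e = axis i 1" and "f = axis j 1"
  have inU: "\<xi> + a *\<^sub>R e + b *\<^sub>R f \<in> U" if "0 \<le> a" "a \<le> h" "0 \<le> b" "b \<le> h" for a b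
  proof -
    have "norm (a *\<^sub>R e + b *\<^sub>R f) \<le> 2 * h"
      using norm_axis_combination_le[of a i b j] that unfolding e_def f_def by linarith
    then have "dist (\<xi> + a *\<^sub>R e + b *\<^sub>R f) \<xi> \<le> 2 * h"
      by (simp add: dist_norm add.assoc)
    then have "\<xi> + a *\<^sub>R e + b *\<^sub>R f \<in> cball \<xi> (2 * h)"
      by (simp add: dist_commute)
    then show ?thesis using box by blast
  qed
  define \<phi> where "\<phi> s = g ((\<xi> + h *\<^sub>R f) + s *\<^sub>R e) - g (\<xi> + s *\<^sub>R e)" for s
  have d\<phi>: "(\<phi> has_real_derivative pdiff i g (\<xi> + h *\<^sub>R f + s *\<^sub>R e) - pdiff i g (\<xi> + s *\<^sub>R e)) (at s)"
    if "0 \<le> s" "s \<le> h" for s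
  proof -
    have "\<xi> + h *\<^sub>R f + s *\<^sub>R e \<in> U" "\<xi> + s *\<^sub>R e \<in> U"
      using inU[of s h] inU[of s 0] that h by (simp_all add: algebra_simps)
    then show ?thesis
      unfolding \<phi>_def e_def using D by (intro DERIV_diff has_real_derivative_along_axis) auto
  qed
  obtain \<sigma> where \<sigma>: "0 < \<sigma>" "\<sigma> < h"
    and \<phi>: "\<phi> h - \<phi> 0 = h * (pdiff i g (\<xi> + h *\<^sub>R f + \<sigma> *\<^sub>R e) - pdiff i g (\<xi> + \<sigma> *\<^sub>R e))"
    using MVT2[OF h d\<phi>] by auto
  define \<psi> where "\<psi> t = pdiff i g ((\<xi> + \<sigma> *\<^sub>R e) + t *\<^sub>R f)" for t
  have d\<psi>: "(\<psi> has_real_derivative pdiff j (pdiff i g) (\<xi> + \<sigma> *\<^sub>R e + t *\<^sub>R f)) (at t)"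
    if "0 \<le> t" "t \<le> h" for t
    unfolding \<psi>_def f_def
    using D inU[of \<sigma> t] that \<sigma> by (intro has_real_derivative_along_axis) (simp add: f_def e_def)
  obtain \<tau> where \<tau>: "0 < \<tau>" "\<tau> < h"
    and \<psi>: "\<psi> h - \<psi> 0 = h * pdiff j (pdiff i g) (\<xi> + \<sigma> *\<^sub>R e + \<tau> *\<^sub>R f)"
    using MVT2[OF h d\<psi>] by auto
  show ?thesis
  proof
    have "norm (\<sigma> *\<^sub>R e + \<tau> *\<^sub>R f) < 2 * h"
      using norm_axis_combination_le[of \<sigma> i \<tau> j] \<sigma> \<tau> unfolding e_def f_def by linarith
    then show "dist (\<xi> + \<sigma> *\<^sub>R e + \<tau> *\<^sub>R f) \<xi> < 2 * h"
      by (simp add: dist_norm add.assoc)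
    have "g (\<xi> + h *\<^sub>R e + h *\<^sub>R f) - g (\<xi> + h *\<^sub>R e) - g (\<xi> + h *\<^sub>R f) + g \<xi> = \<phi> h - \<phi> 0"
      unfolding \<phi>_def by (simp add: algebra_simps)
    also have "\<dots> = h * (\<psi> h - \<psi> 0)"
      unfolding \<phi> \<psi>_def by (simp add: algebra_simps)
    also have "\<dots> = h * h * pdiff j (pdiff i g) (\<xi> + \<sigma> *\<^sub>R e + \<tau> *\<^sub>R f)"
      unfolding \<psi> by simp
    finally show "g (\<xi> + h *\<^sub>R axis i 1 + h *\<^sub>R axis j 1) - g (\<xi> + h *\<^sub>R axis i 1)
        - g (\<xi> + h *\<^sub>R axis j 1) + g \<xi> = h * h * pdiff j (pdiff i g) (\<xi> + \<sigma> *\<^sub>R e + \<tau> *\<^sub>R f)"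
      unfolding e_def f_def .
  qed
qed

lemma pdiff_commute:
  fixes g :: "real^2 \<Rightarrow> real"
  assumes "open U" "\<xi> \<in> U"
    and D: "\<And>y. y \<in> U \<Longrightarrow>
      g differentiable at y \<and> pdiff i g differentiable at y \<and> pdiff j g differentiable at y"
    and cont: "isCont (pdiff j (pdiff i g)) \<xi>" "isCont (pdiff i (pdiff j g)) \<xi>"
  shows "pdiff j (pdiff i g) \<xi> = pdiff i (pdiff j g) \<xi>"
proof (rule ccontr)
  let ?a = "pdiff j (pdiff i g)" and ?b = "pdiff i (pdiff j g)"
  assume "?a \<xi> \<noteq> ?b \<xi>"
  define \<epsilon> where "\<epsilon> = \<bar>?a \<xi> - ?b \<xi>\<bar> / 2"
  have "\<epsilon> > 0" using \<open>?a \<xi> \<noteq> ?b \<xi>\<close> by (simp add: \<epsilon>_def)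
  then obtain \<delta>1 \<delta>2 where "\<delta>1 > 0" "\<delta>2 > 0"
    and \<delta>1: "\<And>y. dist y \<xi> < \<delta>1 \<Longrightarrow> dist (?a y) (?a \<xi>) < \<epsilon>"
    and \<delta>2: "\<And>y. dist y \<xi> < \<delta>2 \<Longrightarrow> dist (?b y) (?b \<xi>) < \<epsilon>"
    using cont unfolding continuous_at_eps_delta by blast
  obtain r where "r > 0" "cball \<xi> r \<subseteq> U"
    using assms(1,2) open_contains_cball by blast
  define h where "h = min r (min \<delta>1 \<delta>2) / 2"
  have "h > 0" "cball \<xi> (2 * h) \<subseteq> U"
    using \<open>r > 0\<close> \<open>\<delta>1 > 0\<close> \<open>\<delta>2 > 0\<close> \<open>cball \<xi> r \<subseteq> U\<close> by (auto simp: h_def)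
  \<comment> \<open>the second difference is the same whichever direction is taken first\<close>
  obtain q1 where q1: "dist q1 \<xi> < 2 * h"
    and \<Delta>1: "g (\<xi> + h *\<^sub>R axis i 1 + h *\<^sub>R axis j 1) - g (\<xi> + h *\<^sub>R axis i 1)
      - g (\<xi> + h *\<^sub>R axis j 1) + g \<xi> = h * h * ?a q1"
    using second_difference_mean_value[OF \<open>h > 0\<close> \<open>cball \<xi> (2 * h) \<subseteq> U\<close>] D by blast
  obtain q2 where q2: "dist q2 \<xi> < 2 * h"
    and \<Delta>2: "g (\<xi> + h *\<^sub>R axis j 1 + h *\<^sub>R axis i 1) - g (\<xi> + h *\<^sub>R axis j 1)
      - g (\<xi> + h *\<^sub>R axis i 1) + g \<xi> = h * h * ?b q2"
    using second_difference_mean_value[OF \<open>h > 0\<close> \<open>cball \<xi> (2 * h) \<subseteq> U\<close>] D by blast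
  have "h * h * ?a q1 = h * h * ?b q2"
    using \<Delta>1 \<Delta>2 by (simp add: algebra_simps)
  then have "?a q1 = ?b q2" using \<open>h > 0\<close> by simp
  moreover have "2 * h \<le> \<delta>1" "2 * h \<le> \<delta>2" by (simp_all add: h_def)
  ultimately have "\<bar>?a \<xi> - ?b \<xi>\<bar> < 2 * \<epsilon>"
    using \<delta>1[of q1] \<delta>2[of q2] q1 q2 by (simp add: dist_real_def)
  then show False by (simp add: \<epsilon>_def)
qed

lemma separable_sum_pdiff:
  fixes f g :: "nat \<Rightarrow> real \<Rightarrow> real" and c :: "nat \<Rightarrow> nat \<Rightarrow> real"
  assumes "finite A" "finite B"
    and f: "\<And>m x. f m differentiable (at x)" and g: "\<And>n x. g n differentiable (at x)"
  defines "T \<equiv> \<lambda>\<xi>::real^2. \<Sum>m\<in>A. \<Sum>n\<in>B. c m n * (f m (\<xi>$1) * g n (\<xi>$2))"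
  shows "T differentiable at \<xi>"
    and "pdiff 1 T \<xi> = (\<Sum>m\<in>A. \<Sum>n\<in>B. c m n * (deriv (f m) (\<xi>$1) * g n (\<xi>$2)))"
    and "pdiff 2 T \<xi> = (\<Sum>m\<in>A. \<Sum>n\<in>B. c m n * (f m (\<xi>$1) * deriv (g n) (\<xi>$2)))"
proof -
  have nth: "(\<lambda>\<xi>::real^2. \<xi>$i) differentiable at \<xi>" for i
    using bounded_linear_imp_differentiable[OF bounded_linear_vec_nth] by blast
  show T: "T differentiable at \<xi>"
    unfolding T_def using assms(1,2) differentiable_compose[OF f nth] differentiable_compose[OF g nth]
    by (intro differentiable_sum ballI differentiable_mult differentiable_const) auto
  have f': "((\<lambda>t. f m (\<xi>$1 + t)) has_real_derivative deriv (f m) (\<xi>$1)) (at 0)" for m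
    using DERIV_shift[of "f m" "deriv (f m) (\<xi>$1)" 0 "\<xi>$1"] f[THEN DERIV_deriv_iff_real_differentiable[THEN iffD2]]
    by (simp add: add.commute)
  have g': "((\<lambda>t. g n (\<xi>$2 + t)) has_real_derivative deriv (g n) (\<xi>$2)) (at 0)" for n
    using DERIV_shift[of "g n" "deriv (g n) (\<xi>$2)" 0 "\<xi>$2"] g[THEN DERIV_deriv_iff_real_differentiable[THEN iffD2]]
    by (simp add: add.commute)
  have axis: "(\<xi> + t *\<^sub>R axis 1 1) $ 1 = \<xi>$1 + t" "(\<xi> + t *\<^sub>R axis 1 1) $ 2 = \<xi>$2"
    "(\<xi> + t *\<^sub>R axis 2 1) $ 1 = \<xi>$1" "(\<xi> + t *\<^sub>R axis 2 1) $ 2 = \<xi>$2 + t" for t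
    by (simp_all add: axis_def)
  show "pdiff 1 T \<xi> = (\<Sum>m\<in>A. \<Sum>n\<in>B. c m n * (deriv (f m) (\<xi>$1) * g n (\<xi>$2)))"
    by (rule pdiff_eqI[OF T]) (unfold T_def axis, intro DERIV_sum DERIV_cmult DERIV_cmult_right f')
  show "pdiff 2 T \<xi> = (\<Sum>m\<in>A. \<Sum>n\<in>B. c m n * (f m (\<xi>$1) * deriv (g n) (\<xi>$2)))"
    by (rule pdiff_eqI[OF T]) (unfold T_def axis, intro DERIV_sum DERIV_cmult g')
qed

lemma continuous_on_separable_sum:
  fixes f g :: "nat \<Rightarrow> real \<Rightarrow> real"
  assumes "\<And>m. continuous_on UNIV (f m)" "\<And>n. continuous_on UNIV (g n)"
  shows "continuous_on S (\<lambda>\<xi>::real^2. \<Sum>m\<in>A. \<Sum>n\<in>B. c m n * (f m (\<xi>$1) * g n (\<xi>$2)))"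
proof -
  have "continuous_on S (\<lambda>\<xi>::real^2. f m (\<xi>$1))" "continuous_on S (\<lambda>\<xi>::real^2. g n (\<xi>$2))" for m n
    by (rule continuous_on_compose2[OF assms(1)] continuous_on_compose2[OF assms(2)];
        auto intro: continuous_intros)+
  then show ?thesis by (intro continuous_intros)
qed

lemma continuous_on_pdiff_separable_sum:
  fixes f g :: "nat \<Rightarrow> real \<Rightarrow> real" and c :: "nat \<Rightarrow> nat \<Rightarrow> real"
  assumes "finite A" "finite B"
    and f: "\<And>m x. f m differentiable (at x)" and g: "\<And>n x. g n differentiable (at x)"
    and f': "\<And>m. continuous_on UNIV (deriv (f m))" and g': "\<And>n. continuous_on UNIV (deriv (g n))"
  shows "continuous_on S (pdiff k (\<lambda>\<xi>::real^2. \<Sum>m\<in>A. \<Sum>n\<in>B. c m n * (f m (\<xi>$1) * g n (\<xi>$2))))"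
proof -
  have "continuous_on UNIV (f m)" "continuous_on UNIV (g n)" for m n
    using f g by (auto intro!: continuous_at_imp_continuous_on differentiable_imp_continuous_within)
  moreover note separable_sum_pdiff(2,3)[OF assms(1-4), of c]
  ultimately show ?thesis
    using exhaust_2[of k] f' g' by (auto intro!: continuous_on_separable_sum)
qed

section \<open>The reference vector fields\<close>

definition chi_sum :: "(nat \<Rightarrow> nat \<Rightarrow> real) \<Rightarrow> nat set \<Rightarrow> real^2 \<Rightarrow> real^2" where
  "chi_sum c I \<xi> = (\<Sum>m\<in>I. \<Sum>n\<in>I. c m n *\<^sub>R chi m n \<xi>)"

lemma chi_sum_nth:
  "(\<lambda>\<xi>. chi_sum c I \<xi> $ 1) = (\<lambda>\<xi>. \<Sum>m\<in>I. \<Sum>n\<in>I. c m n * (phi_basis (m + 3) (\<xi>$1) * psi_basis (n + 2) (\<xi>$2)))"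
  "(\<lambda>\<xi>. chi_sum c I \<xi> $ 2) = (\<lambda>\<xi>. \<Sum>m\<in>I. \<Sum>n\<in>I. - c m n * (psi_basis (m + 2) (\<xi>$1) * phi_basis (n + 3) (\<xi>$2)))"
  by (simp_all add: chi_sum_def chi_def fun_eq_iff)

lemma chi_sum_C1:
  assumes "finite I"
  shows "(\<lambda>y. chi_sum c I y $ i) differentiable at \<xi>"
    and "continuous_on S (pdiff k (\<lambda>y. chi_sum c I y $ i))"
proof -
  note separable = separable_sum_pdiff(1) continuous_on_pdiff_separable_sum
  note first = separable[where f = "\<lambda>m. phi_basis (m + 3)" and g = "\<lambda>n. psi_basis (n + 2)" and c = c]
  note second = separable[where f = "\<lambda>m. psi_basis (m + 2)" and g = "\<lambda>n. phi_basis (n + 3)" and c = "\<lambda>m n. - c m n"]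
  show "(\<lambda>y. chi_sum c I y $ i) differentiable at \<xi>"
    and "continuous_on S (pdiff k (\<lambda>y. chi_sum c I y $ i))"
    using exhaust_2[of i] first second
    by (auto simp: chi_sum_nth assms basis_functions_C1)
qed

lemma chi_sum_divergence_free:
  assumes "finite I" "0 \<notin> I"
  shows "pdiff 1 (\<lambda>y. chi_sum c I y $ 1) \<xi> + pdiff 2 (\<lambda>y. chi_sum c I y $ 2) \<xi> = 0"
proof -
  have phi': "deriv (phi_basis (m + 3)) x = psi_basis (m + 2) x" if "m \<in> I" for m x
    using assms(2) that by (intro DERIV_imp_deriv phi_basis_has_real_derivative) (cases m, auto)
  have "pdiff 1 (\<lambda>y. chi_sum c I y $ 1) \<xi>
      = (\<Sum>m\<in>I. \<Sum>n\<in>I. c m n * (psi_basis (m + 2) (\<xi>$1) * psi_basis (n + 2) (\<xi>$2)))"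
    unfolding chi_sum_nth
    by (subst separable_sum_pdiff(2)[where f = "\<lambda>m. phi_basis (m + 3)" and g = "\<lambda>n. psi_basis (n + 2)"])
       (simp_all add: assms(1) basis_functions_C1 phi')
  moreover have "pdiff 2 (\<lambda>y. chi_sum c I y $ 2) \<xi>
      = (\<Sum>m\<in>I. \<Sum>n\<in>I. - c m n * (psi_basis (m + 2) (\<xi>$1) * psi_basis (n + 2) (\<xi>$2)))"
    unfolding chi_sum_nth
    by (subst separable_sum_pdiff(3)[where f = "\<lambda>m. psi_basis (m + 2)" and g = "\<lambda>n. phi_basis (n + 3)"])
       (simp_all add: assms(1) basis_functions_C1 phi')
  ultimately show ?thesis
    by (simp add: sum_negf)
qed

lemma chi_sum_boundary:
  assumes "\<xi> \<in> Lambda2_closed - Lambda2"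
  shows "chi_sum c I \<xi> = 0"
proof -
  have "\<forall>i. \<bar>\<xi> $ i\<bar> \<le> 1" "\<not> (\<forall>i. \<bar>\<xi> $ i\<bar> < 1)"
    using assms by (auto simp: Lambda2_def Lambda2_closed_def)
  then obtain i where "\<bar>\<xi> $ i\<bar> = 1"
    by (meson less_eq_real_def)
  then have "\<bar>\<xi> $ 1\<bar> = 1 \<or> \<bar>\<xi> $ 2\<bar> = 1"
    using exhaust_2[of i] by auto
  then have "chi m n \<xi> = 0" for m n
    by (auto simp: chi_def vec_eq_iff forall_2 psi_basis_eq_0 phi_basis_eq_0)
  then show ?thesis by (simp add: chi_sum_def)
qed

section \<open>Smooth diffeomorphisms of the square\<close>

lemma Lambda2_eq_box: "Lambda2 = box (-1) 1"
  by (auto simp: Lambda2_def interval_cart abs_less_iff)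

lemma Lambda2_closed_eq_cbox: "Lambda2_closed = cbox (-1) 1"
  by (auto simp: Lambda2_closed_def interval_cart abs_le_iff)

lemma Lambda2_subset_closed: "Lambda2 \<subseteq> Lambda2_closed"
  by (simp add: Lambda2_eq_box Lambda2_closed_eq_cbox box_subset_cbox)

lemma closure_Lambda2: "closure Lambda2 = Lambda2_closed"
  unfolding Lambda2_eq_box Lambda2_closed_eq_cbox
  by (rule closure_box) (simp add: box_ne_empty Basis_vec_def inner_axis)

lemma inverse_2x2_right:
  fixes a b c d u v :: real
  assumes "a * d - b * c \<noteq> 0"
  shows "a * ((d * u - b * v) / (a * d - b * c)) + b * ((a * v - c * u) / (a * d - b * c)) = u"
    and "c * ((d * u - b * v) / (a * d - b * c)) + d * ((a * v - c * u) / (a * d - b * c)) = v"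
proof -
  have "a * ((d * u - b * v) / (a * d - b * c)) + b * ((a * v - c * u) / (a * d - b * c))
      = (a * (d * u - b * v) + b * (a * v - c * u)) / (a * d - b * c)"
    by (simp add: add_divide_distrib)
  also have "\<dots> = u * (a * d - b * c) / (a * d - b * c)"
    by (simp add: algebra_simps)
  finally show "a * ((d * u - b * v) / (a * d - b * c)) + b * ((a * v - c * u) / (a * d - b * c)) = u"
    using assms by simp
  have "c * ((d * u - b * v) / (a * d - b * c)) + d * ((a * v - c * u) / (a * d - b * c))
      = (c * (d * u - b * v) + d * (a * v - c * u)) / (a * d - b * c)"
    by (simp add: add_divide_distrib)
  also have "\<dots> = v * (a * d - b * c) / (a * d - b * c)"
    by (simp add: algebra_simps)
  finally show "c * ((d * u - b * v) / (a * d - b * c)) + d * ((a * v - c * u) / (a * d - b * c)) = v"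
    using assms by simp
qed

locale square_diffeo =
  fixes F :: "real^2 \<Rightarrow> real^2" and U :: "(real^2) set"
  assumes open_U: "open U" and square_subset_U: "Lambda2_closed \<subseteq> U"
    and smooth: "smooth_on U F"
    and inj: "inj_on F Lambda2_closed"
    and det_jac_nonzero: "\<And>\<xi>. \<xi> \<in> Lambda2_closed \<Longrightarrow> det (jac F \<xi>) \<noteq> 0"
begin

definition DF :: "2 \<Rightarrow> 2 \<Rightarrow> real^2 \<Rightarrow> real" where
  "DF i j = pdiff j (\<lambda>y. F y $ i)"

definition jdet :: "real^2 \<Rightarrow> real" where
  "jdet \<xi> = DF 1 1 \<xi> * DF 2 2 \<xi> - DF 1 2 \<xi> * DF 2 1 \<xi>"

definition jac_inv :: "real^2 \<Rightarrow> real^2 \<Rightarrow> real^2" where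
  "jac_inv \<xi> w = vector [(DF 2 2 \<xi> * w$1 - DF 1 2 \<xi> * w$2) / jdet \<xi>,
                           (DF 1 1 \<xi> * w$2 - DF 2 1 \<xi> * w$1) / jdet \<xi>]"

lemma F_nth_differentiable: "x \<in> U \<Longrightarrow> (\<lambda>y. F y $ i) differentiable at x"
  using smooth[unfolded smooth_on_def, THEN spec[of _ i], THEN spec[of _ "[]"], THEN bspec[of _ _ x]] by simp

lemma DF_differentiable: "x \<in> U \<Longrightarrow> DF i j differentiable at x"
  using smooth[unfolded smooth_on_def, THEN spec[of _ i], THEN spec[of _ "[j]"], THEN bspec[of _ _ x]] by (simp add: DF_def)

lemma pdiff_DF_differentiable: "x \<in> U \<Longrightarrow> pdiff k (DF i j) differentiable at x"
  using smooth[unfolded smooth_on_def, THEN spec[of _ i], THEN spec[of _ "[k, j]"], THEN bspec[of _ _ x]] by (simp add: DF_def)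

lemma F_differentiable: "x \<in> U \<Longrightarrow> F differentiable at x"
  using F_nth_differentiable differentiable_vec2_iff by blast

lemma continuous_on_F: "continuous_on Lambda2_closed F"
  using square_subset_U
  by (intro continuous_at_imp_continuous_on ballI differentiable_imp_continuous_within F_differentiable) auto

lemma continuous_on_DF: "continuous_on Lambda2_closed (DF i j)"
  using square_subset_U
  by (intro continuous_at_imp_continuous_on ballI differentiable_imp_continuous_within DF_differentiable) auto

lemma continuous_on_pdiff_DF: "continuous_on Lambda2_closed (pdiff k (DF i j))"
  using square_subset_U
  by (intro continuous_at_imp_continuous_on ballI differentiable_imp_continuous_within
      pdiff_DF_differentiable) auto

lemma jdet_differentiable: "x \<in> U \<Longrightarrow> jdet differentiable at x"
  unfolding jdet_def[abs_def] by (intro differentiable_diff differentiable_mult DF_differentiable)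

lemma pdiff_jdet:
  assumes "x \<in> U"
  shows "pdiff k jdet x = pdiff k (DF 1 1) x * DF 2 2 x + DF 1 1 x * pdiff k (DF 2 2) x
                        - pdiff k (DF 1 2) x * DF 2 1 x - DF 1 2 x * pdiff k (DF 2 1) x"
proof -
  have "(DF i j has_derivative frechet_derivative (DF i j) (at x)) (at x)" for i j
    using DF_differentiable[OF assms] frechet_derivative_works by blast
  then have "(jdet has_derivative (\<lambda>h.
      DF 1 1 x * frechet_derivative (DF 2 2) (at x) h + frechet_derivative (DF 1 1) (at x) h * DF 2 2 x
      - (DF 1 2 x * frechet_derivative (DF 2 1) (at x) h + frechet_derivative (DF 1 2) (at x) h * DF 2 1 x)))
      (at x)"
    unfolding jdet_def[abs_def] by (intro derivative_intros)
  from pdiff_has_derivative[OF this, of k] show ?thesis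
    by (simp add: pdiff_def algebra_simps)
qed

lemma continuous_on_jdet: "continuous_on Lambda2_closed jdet"
  using square_subset_U
  by (intro continuous_at_imp_continuous_on ballI differentiable_imp_continuous_within jdet_differentiable) auto

lemma continuous_on_pdiff_jdet: "continuous_on Lambda2_closed (pdiff k jdet)"
  using square_subset_U pdiff_jdet
  by (intro continuous_on_eq[OF _ pdiff_jdet[symmetric]] continuous_intros continuous_on_DF
      continuous_on_pdiff_DF) auto

lemma jdet_eq: "x \<in> U \<Longrightarrow> jdet x = det (jac F x)"
  using matrix_frechet_derivative_nth[OF F_differentiable]
  by (simp add: jdet_def det_2 jac_def DF_def)

lemma jdet_nonzero: "\<xi> \<in> Lambda2_closed \<Longrightarrow> jdet \<xi> \<noteq> 0"
  using det_jac_nonzero jdet_eq square_subset_U by auto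

lemma continuous_on_jac_inv: "continuous_on Lambda2_closed (\<lambda>\<xi>. jac_inv \<xi> w)"
proof -
  have "continuous_on Lambda2_closed (\<lambda>\<xi>. jac_inv \<xi> w $ 1)"
    and "continuous_on Lambda2_closed (\<lambda>\<xi>. jac_inv \<xi> w $ 2)"
    unfolding jac_inv_def vector_2
    by (intro continuous_intros continuous_on_DF continuous_on_jdet; simp add: jdet_nonzero)+
  then show ?thesis
    unfolding continuous_on_vec_iff by (metis exhaust_2)
qed

lemma frechet_derivative_F_nth:
  "x \<in> U \<Longrightarrow> frechet_derivative F (at x) h $ i = DF i 1 x * h$1 + DF i 2 x * h$2"
  using frechet_derivative_vec_nth[OF F_differentiable] frechet_derivative_eq_pdiff_sum[OF F_nth_differentiable]
  by (simp add: DF_def mult.commute)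

lemma DF_symmetric:
  assumes "x \<in> U"
  shows "pdiff 2 (DF i 1) x = pdiff 1 (DF i 2) x"
  unfolding DF_def
proof (rule pdiff_commute[OF open_U assms])
  show "isCont (pdiff 2 (pdiff 1 (\<lambda>y. F y $ i))) x" "isCont (pdiff 1 (pdiff 2 (\<lambda>y. F y $ i))) x"
    using pdiff_DF_differentiable[OF assms] differentiable_imp_continuous_within
    unfolding DF_def by blast+
  show "(\<lambda>y. F y $ i) differentiable at y \<and> pdiff 1 (\<lambda>y. F y $ i) differentiable at y
      \<and> pdiff 2 (\<lambda>y. F y $ i) differentiable at y" if "y \<in> U" for y
    using F_nth_differentiable[OF that] DF_differentiable[OF that] unfolding DF_def by blast
qed

lemma has_derivative_inv_into:
  assumes "\<xi> \<in> Lambda2"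
  shows "(inv_into Lambda2_closed F has_derivative jac_inv \<xi>) (at (F \<xi>))"
proof (rule has_derivative_inverse_strong[where S = Lambda2 and f = F and x = \<xi>])
  have "\<xi> \<in> U" using assms Lambda2_subset_closed square_subset_U by blast
  show "open Lambda2" by (simp add: Lambda2_eq_box open_box)
  show "continuous_on Lambda2 F"
    using continuous_on_F Lambda2_subset_closed continuous_on_subset by blast
  show "inv_into Lambda2_closed F (F x) = x" if "x \<in> Lambda2" for x
    using inj that Lambda2_subset_closed by auto
  show "(F has_derivative frechet_derivative F (at \<xi>)) (at \<xi>)"
    using F_differentiable[OF \<open>\<xi> \<in> U\<close>] frechet_derivative_works by blast
  have "jdet \<xi> \<noteq> 0" using jdet_nonzero assms Lambda2_subset_closed by blast
  then have "frechet_derivative F (at \<xi>) (jac_inv \<xi> w) $ 1 = w $ 1"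
    and "frechet_derivative F (at \<xi>) (jac_inv \<xi> w) $ 2 = w $ 2" for w
    unfolding frechet_derivative_F_nth[OF \<open>\<xi> \<in> U\<close>] jac_inv_def vector_2 jdet_def
    by (rule inverse_2x2_right)+
  then have "frechet_derivative F (at \<xi>) (jac_inv \<xi> w) $ i = w $ i" for w i
    using exhaust_2[of i] by auto
  then show "frechet_derivative F (at \<xi>) \<circ> jac_inv \<xi> = id"
    by (simp add: fun_eq_iff vec_eq_iff)
qed (use assms in auto)

lemma continuous_on_inv_into_square: "continuous_on (F ` Lambda2_closed) (inv_into Lambda2_closed F)"
  using continuous_on_inv[OF continuous_on_F] inj
  by (simp add: Lambda2_closed_eq_cbox)

lemma open_image_Lambda2: "open (F ` Lambda2)"
proof (rule invariance_of_domain)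
  show "continuous_on Lambda2 F"
    using continuous_on_F Lambda2_subset_closed continuous_on_subset by blast
  show "open Lambda2" by (simp add: Lambda2_eq_box open_box)
  show "inj_on F Lambda2" using inj Lambda2_subset_closed inj_on_subset by blast
qed

lemma closure_image_Lambda2: "closure (F ` Lambda2) = F ` Lambda2_closed"
proof
  have "compact (F ` Lambda2_closed)"
    using continuous_on_F by (simp add: Lambda2_closed_eq_cbox compact_continuous_image)
  then show "closure (F ` Lambda2) \<subseteq> F ` Lambda2_closed"
    using Lambda2_subset_closed by (simp add: closure_minimal compact_imp_closed image_mono)
  show "F ` Lambda2_closed \<subseteq> closure (F ` Lambda2)"
    using image_closure_subset[of Lambda2 F "closure (F ` Lambda2)"] continuous_on_F
    by (simp add: closure_Lambda2 closure_subset)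
qed

end

section \<open>The contravariant Piola transform\<close>

text \<open>For J = (a i j) with partial derivatives da i j k and P the derivative of J x / det J, this is
  the Piola identity tr (P adj J) = div x. The second derivatives of J cancel only because of the
  symmetry hypotheses.\<close>

lemma piola_trace_identity:
  fixes a :: "2 \<Rightarrow> 2 \<Rightarrow> real" and da :: "2 \<Rightarrow> 2 \<Rightarrow> 2 \<Rightarrow> real"
    and x :: "2 \<Rightarrow> real" and dx :: "2 \<Rightarrow> 2 \<Rightarrow> real"
  assumes d: "d = a 1 1 * a 2 2 - a 1 2 * a 2 1" "d \<noteq> 0"
    and symmetric: "da 1 1 2 = da 1 2 1" "da 2 1 2 = da 2 2 1"
    and dd: "\<And>k. dd k = da 1 1 k * a 2 2 + a 1 1 * da 2 2 k - da 1 2 k * a 2 1 - a 1 2 * da 2 1 k"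
    and P: "\<And>i k. P i k = ((da i 1 k * x 1 + a i 1 * dx 1 k + da i 2 k * x 2 + a i 2 * dx 2 k) * d
                            - (a i 1 * x 1 + a i 2 * x 2) * dd k) / d\<^sup>2"
  shows "a 2 2 * P 1 1 - a 2 1 * P 1 2 - a 1 2 * P 2 1 + a 1 1 * P 2 2 = dx 1 1 + dx 2 2"
proof -
  define N where "N i k = (da i 1 k * x 1 + a i 1 * dx 1 k + da i 2 k * x 2 + a i 2 * dx 2 k) * d
                            - (a i 1 * x 1 + a i 2 * x 2) * dd k" for i k
  have P_eq: "P i k = N i k / d\<^sup>2" for i k
    unfolding P N_def ..
  have "a 2 2 * P 1 1 - a 2 1 * P 1 2 - a 1 2 * P 2 1 + a 1 1 * P 2 2
      = (a 2 2 * N 1 1 - a 2 1 * N 1 2 - a 1 2 * N 2 1 + a 1 1 * N 2 2) / d\<^sup>2"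
    unfolding P_eq by (simp add: diff_divide_distrib add_divide_distrib)
  also have "a 2 2 * N 1 1 - a 2 1 * N 1 2 - a 1 2 * N 2 1 + a 1 1 * N 2 2 = (dx 1 1 + dx 2 2) * d\<^sup>2"
    unfolding N_def dd d(1) symmetric by algebra
  finally show ?thesis
    using d(2) by simp
qed

locale piola_square = square_diffeo +
  fixes X :: "real^2 \<Rightarrow> real^2"
  assumes X_nth_differentiable: "\<And>i \<xi>. \<xi> \<in> U \<Longrightarrow> (\<lambda>y. X y $ i) differentiable at \<xi>"
    and continuous_on_pdiff_X: "\<And>i k. continuous_on Lambda2_closed (pdiff k (\<lambda>y. X y $ i))"
begin

definition DX :: "2 \<Rightarrow> 2 \<Rightarrow> real^2 \<Rightarrow> real" where
  "DX j k = pdiff k (\<lambda>y. X y $ j)"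

definition pullback :: "real^2 \<Rightarrow> real^2" where
  "pullback \<xi> = (\<chi> i. (DF i 1 \<xi> * X \<xi> $ 1 + DF i 2 \<xi> * X \<xi> $ 2) / jdet \<xi>)"

definition Dpullback :: "2 \<Rightarrow> 2 \<Rightarrow> real^2 \<Rightarrow> real" where
  "Dpullback i k \<xi> =
     ((pdiff k (DF i 1) \<xi> * X \<xi> $ 1 + DF i 1 \<xi> * DX 1 k \<xi> + pdiff k (DF i 2) \<xi> * X \<xi> $ 2 + DF i 2 \<xi> * DX 2 k \<xi>)
        * jdet \<xi> - (DF i 1 \<xi> * X \<xi> $ 1 + DF i 2 \<xi> * X \<xi> $ 2) * pdiff k jdet \<xi>) / (jdet \<xi>)\<^sup>2"

lemma continuous_on_X: "continuous_on Lambda2_closed X"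
  using X_nth_differentiable differentiable_vec2_iff square_subset_U
  by (intro continuous_at_imp_continuous_on ballI differentiable_imp_continuous_within) blast

lemma pullback_nth_differentiable_pdiff:
  assumes "\<xi> \<in> Lambda2_closed"
  shows "(\<lambda>y. pullback y $ i) differentiable at \<xi>"
    and "pdiff k (\<lambda>y. pullback y $ i) \<xi> = Dpullback i k \<xi>"
proof -
  have "\<xi> \<in> U" using assms square_subset_U by blast
  let ?D = "\<lambda>f. frechet_derivative f (at \<xi>)"
  have dDF: "(DF i j has_derivative ?D (DF i j)) (at \<xi>)" for i j
    using DF_differentiable[OF \<open>\<xi> \<in> U\<close>] frechet_derivative_works by blast
  have dX: "((\<lambda>y. X y $ j) has_derivative ?D (\<lambda>y. X y $ j)) (at \<xi>)" for j
    using X_nth_differentiable[OF \<open>\<xi> \<in> U\<close>] frechet_derivative_works by blast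
  have djdet: "(jdet has_derivative ?D jdet) (at \<xi>)"
    using jdet_differentiable[OF \<open>\<xi> \<in> U\<close>] frechet_derivative_works by blast
  have "((\<lambda>y. pullback y $ i) has_derivative (\<lambda>h.
      ((DF i 1 \<xi> * ?D (\<lambda>y. X y $ 1) h + ?D (DF i 1) h * X \<xi> $ 1
        + (DF i 2 \<xi> * ?D (\<lambda>y. X y $ 2) h + ?D (DF i 2) h * X \<xi> $ 2)) * jdet \<xi>
       - (DF i 1 \<xi> * X \<xi> $ 1 + DF i 2 \<xi> * X \<xi> $ 2) * ?D jdet h) / (jdet \<xi> * jdet \<xi>))) (at \<xi>)"
    unfolding pullback_def vec_lambda_beta
    by (rule has_derivative_divide'[OF has_derivative_add[OF has_derivative_mult[OF dDF dX]
          has_derivative_mult[OF dDF dX]] djdet jdet_nonzero[OF assms]])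
  from this pdiff_has_derivative[OF this, of k]
  show "(\<lambda>y. pullback y $ i) differentiable at \<xi>"
    and "pdiff k (\<lambda>y. pullback y $ i) \<xi> = Dpullback i k \<xi>"
    by (auto simp: differentiable_def Dpullback_def DX_def pdiff_def power2_eq_square algebra_simps)
qed

lemma pullback_differentiable:
  "\<xi> \<in> Lambda2_closed \<Longrightarrow> pullback differentiable at \<xi>"
  using pullback_nth_differentiable_pdiff(1) differentiable_vec2_iff by blast

lemma frechet_derivative_pullback:
  assumes "\<xi> \<in> Lambda2_closed"
  shows "frechet_derivative pullback (at \<xi>) h $ i = h$1 * Dpullback i 1 \<xi> + h$2 * Dpullback i 2 \<xi>"
  using frechet_derivative_vec_nth[OF pullback_differentiable[OF assms]]
    frechet_derivative_eq_pdiff_sum[OF pullback_nth_differentiable_pdiff(1)[OF assms]]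
    pullback_nth_differentiable_pdiff(2)[OF assms]
  by simp

lemma continuous_on_Dpullback: "continuous_on Lambda2_closed (Dpullback i k)"
proof -
  have "continuous_on Lambda2_closed (DX j k)" for j
    unfolding DX_def by (rule continuous_on_pdiff_X)
  moreover have "\<forall>\<xi>\<in>Lambda2_closed. (jdet \<xi>)\<^sup>2 \<noteq> 0"
    by (simp add: jdet_nonzero)
  ultimately show ?thesis
    unfolding Dpullback_def[abs_def]
    by (intro continuous_intros continuous_on_X continuous_on_DF continuous_on_pdiff_DF
        continuous_on_jdet continuous_on_pdiff_jdet)
qed

lemma piola_div_eq_pullback:
  assumes "\<xi> \<in> Lambda2_closed"
  shows "piola_div F X (F \<xi>) = pullback \<xi>"
proof -
  have "\<xi> \<in> U" using assms square_subset_U by blast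
  have "jac F \<xi> $ i $ j = DF i j \<xi>" for i j
    using matrix_frechet_derivative_nth[OF F_differentiable[OF \<open>\<xi> \<in> U\<close>]] by (simp add: jac_def DF_def)
  then show ?thesis
    using inj assms jdet_eq[OF \<open>\<xi> \<in> U\<close>]
    by (simp add: piola_div_def pullback_def vec_eq_iff matrix_vector_mult_def sum_2 divide_inverse mult.commute)
qed

lemma has_derivative_piola_div:
  assumes "\<xi> \<in> Lambda2"
  shows "(piola_div F X has_derivative (\<lambda>w. frechet_derivative pullback (at \<xi>) (jac_inv \<xi> w))) (at (F \<xi>))"
proof -
  let ?G = "inv_into Lambda2_closed F"
  have "\<xi> \<in> Lambda2_closed" using assms Lambda2_subset_closed by blast
  then have "?G (F \<xi>) = \<xi>" using inj by simp
  then have "(pullback has_derivative frechet_derivative pullback (at \<xi>)) (at (?G (F \<xi>)))"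
    using frechet_derivative_works[THEN iffD1, OF pullback_differentiable[OF \<open>\<xi> \<in> Lambda2_closed\<close>]]
    by simp
  from has_derivative_compose[OF has_derivative_inv_into[OF assms] this]
  show ?thesis
  proof (rule has_derivative_transform_within_open[OF _ open_image_Lambda2])
    show "F \<xi> \<in> F ` Lambda2" using assms by blast
    show "pullback (?G x) = piola_div F X x" if "x \<in> F ` Lambda2" for x
      using that inj Lambda2_subset_closed piola_div_eq_pullback by auto
  qed
qed

lemma frechet_derivative_piola_div:
  assumes "\<xi> \<in> Lambda2"
  shows "frechet_derivative (piola_div F X) (at (F \<xi>)) h $ i
    = jac_inv \<xi> h $ 1 * Dpullback i 1 \<xi> + jac_inv \<xi> h $ 2 * Dpullback i 2 \<xi>"
proof -
  have "\<xi> \<in> Lambda2_closed" using assms Lambda2_subset_closed by blast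
  with frechet_derivative_at[OF has_derivative_piola_div[OF assms]] show ?thesis
    by (metis frechet_derivative_pullback)
qed

lemma divergence_piola_div:
  assumes "\<xi> \<in> Lambda2"
  shows "divergence (piola_div F X) (F \<xi>) = (DX 1 1 \<xi> + DX 2 2 \<xi>) / jdet \<xi>"
proof -
  have "\<xi> \<in> U" using assms Lambda2_subset_closed square_subset_U by blast
  have "divergence (piola_div F X) (F \<xi>)
      = (DF 2 2 \<xi> * Dpullback 1 1 \<xi> - DF 2 1 \<xi> * Dpullback 1 2 \<xi>
         - DF 1 2 \<xi> * Dpullback 2 1 \<xi> + DF 1 1 \<xi> * Dpullback 2 2 \<xi>) / jdet \<xi>"
    by (simp add: divergence_def sum_2 frechet_derivative_piola_div[OF assms] jac_inv_def axis_def
        diff_divide_distrib add_divide_distrib)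
  also have "DF 2 2 \<xi> * Dpullback 1 1 \<xi> - DF 2 1 \<xi> * Dpullback 1 2 \<xi>
         - DF 1 2 \<xi> * Dpullback 2 1 \<xi> + DF 1 1 \<xi> * Dpullback 2 2 \<xi> = DX 1 1 \<xi> + DX 2 2 \<xi>"
    by (rule piola_trace_identity[where a = "\<lambda>i j. DF i j \<xi>" and da = "\<lambda>i j k. pdiff k (DF i j) \<xi>"
          and x = "\<lambda>j. X \<xi> $ j" and dx = "\<lambda>j k. DX j k \<xi>" and dd = "\<lambda>k. pdiff k jdet \<xi>"])
       (use jdet_nonzero assms Lambda2_subset_closed DF_symmetric[OF \<open>\<xi> \<in> U\<close>] pdiff_jdet[OF \<open>\<xi> \<in> U\<close>]
        in \<open>auto simp: jdet_def Dpullback_def\<close>)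
  finally show ?thesis .
qed

definition Dpiola :: "real^2 \<Rightarrow> real^2^2" where
  "Dpiola \<xi> = (\<chi> i j. jac_inv \<xi> (axis j 1) $ 1 * Dpullback i 1 \<xi> + jac_inv \<xi> (axis j 1) $ 2 * Dpullback i 2 \<xi>)"

lemma matrix_derivative_piola_div:
  "\<xi> \<in> Lambda2 \<Longrightarrow> matrix (frechet_derivative (piola_div F X) (at (F \<xi>))) = Dpiola \<xi>"
  by (simp add: matrix_def Dpiola_def frechet_derivative_piola_div)

lemma continuous_on_Dpiola: "continuous_on Lambda2_closed Dpiola"
  unfolding Dpiola_def
  by (intro continuous_on_vec_lambda continuous_intros continuous_on_Dpullback continuous_on_jac_inv)

lemma matrix_derivative_piola_div_image:
  "x \<in> F ` Lambda2 \<Longrightarrow>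
    matrix (frechet_derivative (piola_div F X) (at x)) = Dpiola (inv_into Lambda2_closed F x)"
  using inj Lambda2_subset_closed matrix_derivative_piola_div by auto

lemma continuous_on_matrix_derivative_piola_div:
  "continuous_on (F ` Lambda2) (\<lambda>x. matrix (frechet_derivative (piola_div F X) (at x)))"
proof (rule continuous_on_eq[OF _ matrix_derivative_piola_div_image[symmetric]])
  have "F ` Lambda2 \<subseteq> F ` Lambda2_closed" "inv_into Lambda2_closed F ` F ` Lambda2 \<subseteq> Lambda2_closed"
    using Lambda2_subset_closed inj by auto
  then show "continuous_on (F ` Lambda2) (\<lambda>x. Dpiola (inv_into Lambda2_closed F x))"
    using continuous_on_compose2[OF continuous_on_Dpiola continuous_on_subset[OF continuous_on_inv_into_square]]
    by blast
qed

lemma bounded_matrix_derivative_piola_div: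
  "bounded ((\<lambda>x. matrix (frechet_derivative (piola_div F X) (at x))) ` F ` Lambda2)"
proof (rule bounded_subset)
  show "bounded (Dpiola ` Lambda2_closed)"
    using compact_continuous_image[OF continuous_on_Dpiola] compact_imp_bounded
    by (simp add: Lambda2_closed_eq_cbox)
  show "(\<lambda>x. matrix (frechet_derivative (piola_div F X) (at x))) ` F ` Lambda2 \<subseteq> Dpiola ` Lambda2_closed"
    using matrix_derivative_piola_div Lambda2_subset_closed by auto
qed

lemma continuous_on_piola_div: "continuous_on (F ` Lambda2_closed) (piola_div F X)"
proof (rule continuous_on_eq)
  show "continuous_on (F ` Lambda2_closed) (pullback \<circ> inv_into Lambda2_closed F)"
  proof (rule continuous_on_compose[OF continuous_on_inv_into_square])
    show "continuous_on (inv_into Lambda2_closed F ` F ` Lambda2_closed) pullback"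
      using inj pullback_differentiable
      by (auto intro!: continuous_at_imp_continuous_on differentiable_imp_continuous_within)
  qed
  show "(pullback \<circ> inv_into Lambda2_closed F) x = piola_div F X x" if "x \<in> F ` Lambda2_closed" for x
    using that inj piola_div_eq_pullback by auto
qed

lemma piola_div_frontier:
  assumes "\<And>\<xi>. \<xi> \<in> Lambda2_closed - Lambda2 \<Longrightarrow> X \<xi> = 0"
    and "x \<in> frontier (F ` Lambda2)"
  shows "piola_div F X x = 0"
proof -
  obtain \<xi> where "\<xi> \<in> Lambda2_closed" "\<xi> \<notin> Lambda2" "x = F \<xi>"
    using assms(2) unfolding frontier_def closure_image_Lambda2 interior_open[OF open_image_Lambda2]
    by auto
  then have "X \<xi> = 0" "piola_div F X x = pullback \<xi>"
    using assms(1) piola_div_eq_pullback by auto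
  then show ?thesis by (simp add: pullback_def vec_eq_iff)
qed

end

lemma piola_div_sum:
  "piola_div F (\<lambda>\<xi>. \<Sum>m\<in>A. \<Sum>n\<in>B. c m n *\<^sub>R \<Phi> m n \<xi>) x = (\<Sum>m\<in>A. \<Sum>n\<in>B. c m n *\<^sub>R piola_div F (\<Phi> m n) x)"
proof -
  have "J *v (\<Sum>m\<in>A. \<Sum>n\<in>B. c m n *\<^sub>R w m n) = (\<Sum>m\<in>A. \<Sum>n\<in>B. c m n *\<^sub>R (J *v w m n))"
    for J :: "real^2^2" and w
    by (simp add: linear_sum[OF matrix_vector_mul_linear] matrix_vector_mult_scaleR)
  then show ?thesis
    by (simp add: piola_div_def Let_def scaleR_sum_right)
qed

theorem proposition2p3:
  fixes F :: "real^2 \<Rightarrow> real^2" and N :: nat and c :: "nat \<Rightarrow> nat \<Rightarrow> real"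
  assumes "N \<ge> 4" and "diffeo_square F"
  defines "\<Omega> \<equiv> F ` Lambda2"
  defines "v \<equiv> (\<lambda>x. \<Sum>m=1..N-3. \<Sum>n=1..N-3. c m n *\<^sub>R piola_div F (chi m n) x)"
  shows "(\<forall>x\<in>\<Omega>. v differentiable (at x) \<and> divergence v x = 0)
       \<and> continuous_on \<Omega> (\<lambda>x. matrix (frechet_derivative v (at x)))
       \<and> bounded ((\<lambda>x. matrix (frechet_derivative v (at x))) ` \<Omega>)
       \<and> continuous_on (closure \<Omega>) v
       \<and> (\<forall>x\<in>frontier \<Omega>. v x = 0)"
proof -
  \<comment> \<open>\<open>N \<ge> 4\<close> only makes the index set nonempty; the argument does not need it.\<close>
  define I where "I = {1..N-3}"
  have I: "finite I" "0 \<notin> I" by (simp_all add: I_def)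
  obtain U where "square_diffeo F U"
    using assms(2) unfolding diffeo_square_def square_diffeo_def jac_def by blast
  then interpret piola_square F U "chi_sum c I"
    by (simp add: piola_square_def piola_square_axioms_def chi_sum_C1[OF I(1)])
  have v: "v = piola_div F (chi_sum c I)"
    unfolding v_def chi_sum_def[abs_def] I_def by (simp add: piola_div_sum fun_eq_iff)
  have "v differentiable (at x) \<and> divergence v x = 0" if "x \<in> \<Omega>" for x
  proof -
    obtain \<xi> where "\<xi> \<in> Lambda2" "x = F \<xi>" using \<open>x \<in> \<Omega>\<close> by (auto simp: \<Omega>_def)
    then show ?thesis
      using has_derivative_piola_div divergence_piola_div chi_sum_divergence_free[OF I]
      by (auto simp: v DX_def differentiable_def)
  qed
  then show ?thesis
    unfolding v \<Omega>_def closure_image_Lambda2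
    using continuous_on_matrix_derivative_piola_div bounded_matrix_derivative_piola_div
      continuous_on_piola_div piola_div_frontier[OF chi_sum_boundary]
    by (simp add: v \<Omega>_def)
qed

end
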